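(* Let $F$ be the free group on $x,y$, $H<F$ the index-2 subgroup of elements of even total exponent in $y$, $\psi:H\to F$ the homomorphism with $\psi(x)=y$, $\psi(y^2)=y^{-1}x^{-1}$, $\psi(y^{-1}xy)=1$, and $\widehat\psi:F\to F$ given by $\widehat\psi(w)=\psi(w)$ for $w\in H$ and $\widehat\psi(w)=\psi(y^{-1}w)$ for $w\notin H$. Then for every $w\in F$ there is $k\ge0$ such that \[\widehat\psi^{\circ k}(w)\in\mathcal{N}=\{1,\,x,\,y,\,x^{-1},\,y^{-1},\,xy,\,y^{-1}x^{-1}\}.\]
   Context: $H$ is free on $x,y^2,y^{-1}xy$, so $\psi$ is well defined; $\widehat\psi^{\circ k}$ is the $k$-fold iterate of $\widehat\psi$. *)

theory Defs
  imports "HOL-Algebra.Group"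
begin

text \<open>The free group F on two generators x, y, realised as the group of
freely reduced words. A letter is a generator together with a flag
(True = inverse letter).\<close>

datatype gen = Gx | Gy

type_synonym letter = "gen \<times> bool"

definition inv_letter :: "letter \<Rightarrow> letter" where
  "inv_letter a = (fst a, \<not> snd a)"

fun red :: "letter list \<Rightarrow> letter list" where
  "red [] = []"
| "red (a # w) = (case red w of
       [] \<Rightarrow> [a]
     | b # v \<Rightarrow> (if b = inv_letter a then v else a # b # v))"

definition reduced :: "letter list \<Rightarrow> bool" where
  "reduced w \<longleftrightarrow> (\<forall>i. Suc i < length w \<longrightarrow> w ! Suc i \<noteq> inv_letter (w ! i))"

definition free_group2 :: "letter list monoid" where
  "free_group2 = \<lparr> carrier = {w. reduced w},
                   mult = (\<lambda>u v. red (u @ v)),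
                   one = [] \<rparr>"

definition gx :: "letter list" where "gx = [(Gx, False)]"
definition gy :: "letter list" where "gy = [(Gy, False)]"
definition gx_inv :: "letter list" where "gx_inv = [(Gx, True)]"
definition gy_inv :: "letter list" where "gy_inv = [(Gy, True)]"

definition y_exp :: "letter list \<Rightarrow> int" where
  "y_exp w = (\<Sum>a\<leftarrow>w. if fst a = Gy then (if snd a then -1 else 1) else 0)"

definition H_set :: "letter list set" where
  "H_set = {w \<in> carrier free_group2. even (y_exp w)}"

definition psi_hat :: "(letter list \<Rightarrow> letter list) \<Rightarrow> letter list \<Rightarrow> letter list" where
  "psi_hat \<psi> w = (if w \<in> H_set then \<psi> w else \<psi> (gy_inv \<otimes>\<^bsub>free_group2\<^esub> w))"

definition N_set :: "letter list set" where
  "N_set = {[], gx, gy, gx_inv, gy_inv, gx @ gy, gy_inv @ gx_inv}"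

end

theory Submission
  imports Defs
begin

text \<open>
  Strategy.  Elements of the free group F on x, y are freely reduced words; the map
  psi-hat is computed explicitly and then shown to shrink words.

  (2) Transducers.  A two-state letter-by-letter transducer whose "read a, then read
      a inverse" steps cancel commutes with free reduction.

  H is generated by x, y^2 and the conjugates y^b x^c y^-b; by
      induction over these generators, any psi with the prescribed values equals
      the Reidemeister-Schreier transducer for the transversal {1, y}.  Hence
      psi-hat is an explicit function psi_hat_xy on reduced words.

  Conjugating psi_hat_xy by this automorphism gives a
      map psi_hat_ty which, after reduction, replaces each pair of consecutive
      letters by a word of length at most two.

  A potential function shows that applying psi_hat_ty twice strictly
      shortens every word of length at least 3, and words of length at most 2 reach
      the image of N in at most one step.
\<close>

section \<open>Free reduction\<close>

lemma inv_inv [simp]: "inv_letter (inv_letter a) = a"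
  by (simp add: inv_letter_def)

lemma reduced_Nil [simp]: "reduced []"
  by (simp add: reduced_def)

lemma reduced_Cons: "reduced (a # w) \<longleftrightarrow> reduced w \<and> (w \<noteq> [] \<longrightarrow> hd w \<noteq> inv_letter a)"
proof
  assume r: "reduced (a # w)"
  have "reduced w"
    unfolding reduced_def
  proof (intro allI impI)
    fix i assume "Suc i < length w"
    with r show "w ! Suc i \<noteq> inv_letter (w ! i)"
      unfolding reduced_def by (metis Suc_less_eq length_Cons nth_Cons_Suc)
  qed
  moreover have "w \<noteq> [] \<longrightarrow> hd w \<noteq> inv_letter a"
    using r unfolding reduced_def
    by (metis hd_conv_nth length_Cons length_greater_0_conv nth_Cons_0 nth_Cons_Suc Suc_less_eq)
  ultimately show "reduced w \<and> (w \<noteq> [] \<longrightarrow> hd w \<noteq> inv_letter a)" by blast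
next
  assume h: "reduced w \<and> (w \<noteq> [] \<longrightarrow> hd w \<noteq> inv_letter a)"
  show "reduced (a # w)"
    unfolding reduced_def
  proof (intro allI impI)
    fix i assume i: "Suc i < length (a # w)"
    show "(a # w) ! Suc i \<noteq> inv_letter ((a # w) ! i)"
    proof (cases i)
      case 0 then show ?thesis using h i by (auto simp: hd_conv_nth)
    next
      case (Suc j) then show ?thesis using h i unfolding reduced_def by auto
    qed
  qed
qed

lemma reduced_Cons_Cons [simp]: "reduced (a # b # w) \<longleftrightarrow> b \<noteq> inv_letter a \<and> reduced (b # w)"
  using reduced_Cons[of a "b # w"] by auto

lemma reduced_single [simp]: "reduced [a]"
  by (simp add: reduced_Cons)

definition cons_red :: "letter \<Rightarrow> letter list \<Rightarrow> letter list" where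
  "cons_red a w = (case w of [] \<Rightarrow> [a] | b # v \<Rightarrow> (if b = inv_letter a then v else a # b # v))"

lemma red_Cons: "red (a # w) = cons_red a (red w)"
  by (simp add: cons_red_def)

declare red.simps(2) [simp del]

lemmas red_eval = red_Cons cons_red_def inv_letter_def

lemma reduced_cons_red: "reduced w \<Longrightarrow> reduced (cons_red a w)"
  by (auto simp: cons_red_def reduced_Cons split: list.splits)

lemma reduced_red [simp]: "reduced (red w)"
  by (induction w) (auto simp: red_Cons reduced_cons_red)

lemma red_reduced: "reduced w \<Longrightarrow> red w = w"
  by (induction w) (auto simp: red_Cons cons_red_def reduced_Cons split: list.splits)

lemma red_red [simp]: "red (red w) = red w"
  by (simp add: red_reduced)

lemma cons_red_cancel: "reduced w \<Longrightarrow> cons_red a (cons_red (inv_letter a) w) = w"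
  by (cases w) (auto simp: cons_red_def reduced_Cons split: list.splits)

text \<open>Reducing a factor first does not change the reduction of a product; this is
  associativity of the multiplication of free_group2.\<close>
lemma red_append_red_right: "red (u @ red v) = red (u @ v)"
  by (induction u) (auto simp: red_Cons)

lemma red_append_red_left: "red (red u @ v) = red (u @ v)"
proof (induction u)
  case Nil then show ?case by (simp add: red_append_red_right)
next
  case (Cons a u)
  have "red ((a # u) @ v) = cons_red a (red (red u @ v))"
    using Cons by (simp add: red_Cons)
  also have "\<dots> = red (red (a # u) @ v)"
  proof (cases "red u")
    case Nil then show ?thesis by (simp add: red_Cons cons_red_def)
  next
    case (Cons b r)
    show ?thesis
    proof (cases "b = inv_letter a")
      case True
      have "cons_red a (red (red u @ v)) = cons_red a (cons_red b (red (r @ v)))"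
        using Cons by (simp add: red_Cons)
      also have "\<dots> = red (r @ v)"
        using True cons_red_cancel[of "red (r @ v)" "inv_letter b"] by simp
      finally show ?thesis using Cons True by (simp add: red_Cons cons_red_def)
    next
      case False then show ?thesis using Cons by (simp add: red_Cons cons_red_def)
    qed
  qed
  finally show ?case by simp
qed

lemma red_append_red_both: "red (red u @ red v) = red (u @ v)"
  by (simp add: red_append_red_left red_append_red_right)

lemma red_Cons_red [simp]: "red (a # red w) = red (a # w)"
  by (simp add: red_Cons)

lemma red_cancel_mid: "red (p @ a # inv_letter a # q) = red (p @ q)"
proof -
  have "red (a # inv_letter a # q) = red q"
    using cons_red_cancel[of "red q" a] cons_red_cancel[of "red q" "inv_letter a"]
    by (simp add: red_Cons)
  then show ?thesis by (metis red_append_red_right)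
qed

lemma red_Nil_prefix: "red p = [] \<Longrightarrow> red (p @ q) = red q"
  by (metis append_Nil red_append_red_left)

definition inv_word :: "letter list \<Rightarrow> letter list" where
  "inv_word u = rev (map inv_letter u)"

lemma red_inv_word_left: "red (inv_word u @ u) = []"
proof (induction u)
  case Nil then show ?case by (simp add: inv_word_def)
next
  case (Cons a u)
  have "red (inv_word (a # u) @ a # u) = red (inv_word u @ inv_letter a # inv_letter (inv_letter a) # u)"
    by (simp add: inv_word_def)
  also have "\<dots> = red (inv_word u @ u)" by (rule red_cancel_mid)
  finally show ?case using Cons by simp
qed

lemma red_inv_word_right: "red (u @ inv_word u) = []"
  using red_inv_word_left[of "inv_word u"] by (simp add: inv_word_def rev_map comp_def)

lemma red_left_cancel: "red (q @ p) = red (q @ r) \<Longrightarrow> red p = red r"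
  by (metis append.assoc red_Nil_prefix red_append_red_right red_inv_word_left)

lemma length_red: "length (red w) \<le> length w"
proof (induction w)
  case (Cons a w)
  have "length (cons_red a (red w)) \<le> Suc (length (red w))"
    by (auto simp: cons_red_def split: list.splits)
  with Cons show ?case by (simp add: red_Cons)
qed simp

text \<open>Free reduction removes letters in cancelling pairs, so it preserves the
  parity of the length.\<close>
lemma even_length_red: "even (length (red w)) \<longleftrightarrow> even (length w)"
proof (induction w)
  case (Cons a w)
  have "even (length (cons_red a (red w))) \<longleftrightarrow> odd (length (red w))"
    by (auto simp: cons_red_def split: list.splits)
  with Cons show ?case by (simp add: red_Cons)
qed simp

lemma fg_carrier: "carrier free_group2 = {w. reduced w}"
  by (simp add: free_group2_def)

lemma fg_mult: "x \<otimes>\<^bsub>free_group2\<^esub> y = red (x @ y)"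
  by (simp add: free_group2_def)

lemma fg_one: "\<one>\<^bsub>free_group2\<^esub> = []"
  by (simp add: free_group2_def)

section \<open>The exponent of y and the subgroup H\<close>

definition y_letter_exp :: "letter \<Rightarrow> int" where
  "y_letter_exp a = (if fst a = Gy then (if snd a then -1 else 1) else 0)"

lemma y_exp_Nil [simp]: "y_exp [] = 0"
  by (simp add: y_exp_def)

lemma y_exp_Cons [simp]: "y_exp (a # w) = y_letter_exp a + y_exp w"
  by (simp add: y_exp_def y_letter_exp_def)

lemma y_exp_append [simp]: "y_exp (u @ v) = y_exp u + y_exp v"
  by (induction u) auto

lemma y_exp_red [simp]: "y_exp (red w) = y_exp w"
proof (induction w)
  case (Cons a w)
  have "y_exp (cons_red a v) = y_letter_exp a + y_exp v" for v
    by (auto simp: cons_red_def y_letter_exp_def inv_letter_def split: list.splits)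
  with Cons show ?case by (simp add: red_Cons)
qed simp

lemma y_exp_inv_word: "y_exp (inv_word u) = - y_exp u"
proof (induction u)
  case (Cons a u)
  have "y_letter_exp (inv_letter a) = - y_letter_exp a"
    by (simp add: y_letter_exp_def inv_letter_def)
  with Cons show ?case by (simp add: inv_word_def)
qed (simp add: inv_word_def)

lemma H_set_iff: "w \<in> H_set \<longleftrightarrow> reduced w \<and> even (y_exp w)"
  by (simp add: H_set_def fg_carrier)

abbreviation "lx \<equiv> (Gx, False)"
abbreviation "lX \<equiv> (Gx, True)"
abbreviation "ly \<equiv> (Gy, False)"
abbreviation "lY \<equiv> (Gy, True)"

lemma letter_cases: obtains "a = lx" | "a = lX" | "a = ly" | "a = lY"
proof -
  obtain g b where "a = (g, b)" by (cases a)
  then show ?thesis using that by (cases g; cases b) auto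
qed

text \<open>Words generating H as a monoid: x^c, y^b y^b and y^b x^c y^-b.\<close>
definition H_generators :: "letter list set" where
  "H_generators = {[(Gx, c)] | c. True} \<union> {[(Gy, b), (Gy, b)] | b. True}
     \<union> {[(Gy, b), (Gx, c), (Gy, \<not> b)] | b c. True}"

lemma H_generators_in_H: "g \<in> H_generators \<Longrightarrow> g \<in> H_set"
  by (auto simp: H_generators_def H_set_iff y_letter_exp_def inv_letter_def)

text \<open>Every nonempty element of H is a generator times a shorter element of H.
  A word y^b x^c ... is split as (y^b x^c y^-b) (y^b ...).\<close>
lemma H_set_split:
  assumes w: "w \<in> H_set" and ne: "w \<noteq> []"
  obtains g w' where "g \<in> H_generators" "w' \<in> H_set" "length w' < length w" "w = red (g @ w')"
proof -
  obtain a w1 where w_eq: "w = a # w1" using ne by (cases w) auto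
  have wr: "reduced w" "even (y_exp w)" using w by (auto simp: H_set_iff)
  obtain g0 b where a: "a = (g0, b)" by (cases a)
  show ?thesis
  proof (cases g0)
    case Gx
    have "[a] \<in> H_generators" "w1 \<in> H_set" "length w1 < length w"
      using wr w_eq a Gx by (auto simp: H_generators_def H_set_iff reduced_Cons y_letter_exp_def)
    moreover have "w = red ([a] @ w1)" using wr w_eq by (simp add: red_reduced)
    ultimately show ?thesis by (rule that)
  next
    case Gy
    have "w1 \<noteq> []" using wr w_eq a Gy by (cases b) (auto simp: y_letter_exp_def)
    then obtain g2 b2 w2 where w1: "w1 = (g2, b2) # w2" by (cases w1) auto
    show ?thesis
    proof (cases g2)
      case Gy
      have bb: "b2 = b" using wr w_eq w1 a Gy \<open>g0 = Gy\<close> by (auto simp: inv_letter_def)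
      have "[a, a] \<in> H_generators" "w2 \<in> H_set" "length w2 < length w"
        using wr w_eq w1 a Gy \<open>g0 = Gy\<close> bb
        by (auto simp: H_generators_def H_set_iff reduced_Cons y_letter_exp_def)
      moreover have "w = red ([a, a] @ w2)"
        using wr w_eq w1 a Gy bb \<open>g0 = Gy\<close> by (simp add: red_reduced)
      ultimately show ?thesis by (rule that)
    next
      case Gx
      define g where "g = [(Gy, b), (Gx, b2), (Gy, \<not> b)]"
      define w' where "w' = red ((Gy, b) # w2)"
      have "g \<in> H_generators" by (auto simp: g_def H_generators_def)
      moreover have "w' \<in> H_set"
        using wr w_eq w1 a Gx \<open>g0 = Gy\<close> by (auto simp: H_set_iff w'_def y_letter_exp_def)
      moreover have "length w' < length w"
        using length_red[of "(Gy, b) # w2"] w_eq w1 by (simp add: w'_def)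
      moreover have "red (g @ w') = w"
      proof -
        have "red (g @ w') = red (g @ (Gy, b) # w2)"
          unfolding w'_def by (rule red_append_red_right)
        also have "\<dots> = red ([(Gy, b), (Gx, b2)] @ (Gy, \<not> b) # inv_letter (Gy, \<not> b) # w2)"
          by (simp add: g_def inv_letter_def)
        also have "\<dots> = red ([(Gy, b), (Gx, b2)] @ w2)" by (rule red_cancel_mid)
        also have "\<dots> = w" using wr w_eq w1 a Gx \<open>g0 = Gy\<close> by (simp add: red_reduced)
        finally show ?thesis .
      qed
      ultimately show ?thesis using that by simp
    qed
  qed
qed

lemma H_set_induct [consumes 1, case_names Nil step]:
  assumes "w \<in> H_set" and "P []"
    and step: "\<And>g w. g \<in> H_generators \<Longrightarrow> w \<in> H_set \<Longrightarrow> P w \<Longrightarrow> P (red (g @ w))"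
  shows "P w"
  using assms(1)
proof (induction "length w" arbitrary: w rule: less_induct)
  case less
  show ?case
  proof (cases "w = []")
    case True with \<open>P []\<close> show ?thesis by simp
  next
    case False
    then obtain g w' where "g \<in> H_generators" "w' \<in> H_set" "length w' < length w" "w = red (g @ w')"
      using H_set_split[OF less.prems] by blast
    then show ?thesis using step less.hyps by metis
  qed
qed

section \<open>Transducers\<close>

type_synonym transducer = "bool \<Rightarrow> letter \<Rightarrow> letter list \<times> bool"

fun run :: "transducer \<Rightarrow> bool \<Rightarrow> letter list \<Rightarrow> letter list" where
  "run e s [] = []"
| "run e s (a # w) = fst (e s a) @ run e (snd (e s a)) w"

fun final_state :: "transducer \<Rightarrow> bool \<Rightarrow> letter list \<Rightarrow> bool" where
  "final_state e s [] = s"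
| "final_state e s (a # w) = final_state e (snd (e s a)) w"

lemma run_append: "run e s (u @ v) = run e s u @ run e (final_state e s u) v"
  by (induction u arbitrary: s) auto

definition respects_cancellation :: "transducer \<Rightarrow> bool" where
  "respects_cancellation e \<longleftrightarrow> (\<forall>s a. snd (e (snd (e s a)) (inv_letter a)) = s \<and>
       red (fst (e s a) @ fst (e (snd (e s a)) (inv_letter a))) = [])"

lemma red_run_cons_red:
  assumes "respects_cancellation e"
  shows "red (run e s (cons_red a r)) = red (run e s (a # r))"
proof (cases r)
  case Nil then show ?thesis by (simp add: cons_red_def)
next
  case (Cons b v)
  show ?thesis
  proof (cases "b = inv_letter a")
    case True
    let ?o = "fst (e s a)" and ?s = "snd (e s a)"
    have e: "snd (e ?s (inv_letter a)) = s" "red (?o @ fst (e ?s (inv_letter a))) = []"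
      using assms unfolding respects_cancellation_def by blast+
    have "red (run e s (a # r)) = red ((?o @ fst (e ?s (inv_letter a))) @ run e s v)"
      using Cons True e by simp
    also have "\<dots> = red (run e s v)" by (rule red_Nil_prefix[OF e(2)])
    finally show ?thesis using Cons True by (simp add: cons_red_def)
  next
    case False then show ?thesis using Cons by (simp add: cons_red_def)
  qed
qed

lemma red_run_red:
  assumes "respects_cancellation e"
  shows "red (run e s (red u)) = red (run e s u)"
proof (induction u arbitrary: s)
  case (Cons a u)
  have "red (run e s (red (a # u))) = red (run e s (a # red u))"
    by (simp add: red_Cons red_run_cons_red[OF assms])
  also have "\<dots> = red (fst (e s a) @ red (run e (snd (e s a)) (red u)))"
    by (simp add: red_append_red_right)
  also have "\<dots> = red (run e s (a # u))"
    using Cons by (simp add: red_append_red_right)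
  finally show ?case .
qed simp

definition subst_tr :: "(letter \<Rightarrow> letter list) \<Rightarrow> transducer" where
  "subst_tr f s a = (f a, s)"

lemma run_subst_tr: "run (subst_tr f) s w = concat (map f w)"
  by (induction w) (simp_all add: subst_tr_def)

lemma red_concat_map_red:
  assumes "\<And>a. red (f a @ f (inv_letter a)) = []"
  shows "red (concat (map f (red w))) = red (concat (map f w))"
proof -
  have "respects_cancellation (subst_tr f)"
    using assms by (simp add: respects_cancellation_def subst_tr_def)
  from red_run_red[OF this] show ?thesis by (simp add: run_subst_tr)
qed

section \<open>The map psi as a transducer\<close>

text \<open>Reidemeister-Schreier transducer for psi: the state records whether the
  prefix read so far lies in the coset yH.  In the trivial coset x^c is sent to
  y^c; in the coset yH the letters x^c contribute nothing (as y^-1 x y maps to 1);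
  the letters y^b produce the images of y^2 and y^-2.\<close>

definition psi_tr :: transducer where
  "psi_tr s a = (if fst a = Gx then (if s then [] else [(Gy, snd a)], s)
     else if snd a then (if s then [] else [lx, ly], \<not> s)
     else (if s then [lY, lX] else [], \<not> s))"

abbreviation psi_word :: "letter list \<Rightarrow> letter list" where
  "psi_word w \<equiv> red (run psi_tr False w)"

lemma psi_tr_respects_cancellation: "respects_cancellation psi_tr"
  unfolding respects_cancellation_def
proof (intro allI)
  fix s :: bool and a :: letter
  show "snd (psi_tr (snd (psi_tr s a)) (inv_letter a)) = s \<and>
       red (fst (psi_tr s a) @ fst (psi_tr (snd (psi_tr s a)) (inv_letter a))) = []"
    by (cases a rule: letter_cases; cases s) (simp_all add: psi_tr_def red_eval)
qed

lemma final_state_psi_tr: "final_state psi_tr s w = (s = even (y_exp w))"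
proof (induction w arbitrary: s)
  case (Cons a w)
  then show ?case by (cases a rule: letter_cases; simp add: psi_tr_def y_letter_exp_def; blast)
qed simp

lemma psi_word_mult:
  assumes "even (y_exp g)"
  shows "psi_word (red (g @ w)) = red (psi_word g @ psi_word w)"
proof -
  have "psi_word (red (g @ w)) = red (run psi_tr False g @ run psi_tr False w)"
    using assms by (simp add: red_run_red[OF psi_tr_respects_cancellation] run_append
        final_state_psi_tr)
  then show ?thesis by (simp add: red_append_red_both)
qed

definition psi_hat_xy :: "letter list \<Rightarrow> letter list" where
  "psi_hat_xy w = psi_word (if even (y_exp w) then w else lY # w)"

context
  fixes \<psi> :: "letter list \<Rightarrow> letter list"
  assumes hom: "\<psi> \<in> hom (free_group2\<lparr>carrier := H_set\<rparr>) free_group2"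
    and px: "\<psi> gx = gy"
    and py2: "\<psi> (gy \<otimes>\<^bsub>free_group2\<^esub> gy) = gy_inv \<otimes>\<^bsub>free_group2\<^esub> gx_inv"
    and pc: "\<psi> (gy_inv \<otimes>\<^bsub>free_group2\<^esub> gx \<otimes>\<^bsub>free_group2\<^esub> gy) = \<one>\<^bsub>free_group2\<^esub>"
begin

lemma psi_mult: "u \<in> H_set \<Longrightarrow> v \<in> H_set \<Longrightarrow> \<psi> (red (u @ v)) = red (\<psi> u @ \<psi> v)"
  using hom by (auto simp: hom_def fg_mult)

lemma psi_reduced: "u \<in> H_set \<Longrightarrow> reduced (\<psi> u)"
  using hom by (auto simp: hom_def fg_carrier)

lemma psi_Nil: "\<psi> [] = []"
proof -
  have H: "[] \<in> H_set" by (simp add: H_set_iff)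
  have "red (\<psi> [] @ []) = red (\<psi> [] @ \<psi> [])"
    using psi_mult[OF H H] psi_reduced[OF H] by (simp add: red_reduced)
  then have "red [] = red (\<psi> [])" by (rule red_left_cancel)
  then show ?thesis using psi_reduced[OF H] by (simp add: red_reduced)
qed

lemma psi_inv_word:
  assumes u: "u \<in> H_set"
  shows "\<psi> (red (inv_word u)) = red (inv_word (\<psi> u))"
proof -
  let ?v = "red (inv_word u)"
  have v: "?v \<in> H_set" using u by (simp add: H_set_iff y_exp_inv_word)
  have "red (u @ ?v) = []" by (simp add: red_append_red_right red_inv_word_right)
  then have "red (\<psi> u @ \<psi> ?v) = red (\<psi> u @ inv_word (\<psi> u))"
    using psi_mult[OF u v] psi_Nil red_inv_word_right by simp
  then have "red (\<psi> ?v) = red (inv_word (\<psi> u))" by (rule red_left_cancel)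
  then show ?thesis using psi_reduced[OF v] by (simp add: red_reduced)
qed

lemma psi_x_power: "\<psi> [(Gx, c)] = [(Gy, c)]"
proof -
  have x: "\<psi> [lx] = [ly]" using px by (simp add: gx_def gy_def)
  have "\<psi> [lX] = \<psi> (red (inv_word [lx]))" by (simp add: inv_word_def red_eval)
  also have "\<dots> = red (inv_word [ly])"
    using psi_inv_word[of "[lx]"] x by (simp add: H_set_iff y_letter_exp_def inv_letter_def inv_word_def)
  also have "\<dots> = [lY]" by (simp add: inv_word_def red_eval)
  finally show ?thesis using x by (cases c) simp_all
qed

lemma psi_y_square: "\<psi> [ly, ly] = [lY, lX]" "\<psi> [lY, lY] = [lx, ly]"
proof -
  show yy: "\<psi> [ly, ly] = [lY, lX]"
    using py2 by (simp add: gy_def gy_inv_def gx_inv_def fg_mult red_eval)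
  have "\<psi> [lY, lY] = \<psi> (red (inv_word [ly, ly]))" by (simp add: inv_word_def red_eval)
  also have "\<dots> = red (inv_word [lY, lX])"
    using psi_inv_word[of "[ly, ly]"] yy by (simp add: H_set_iff y_letter_exp_def inv_letter_def inv_word_def)
  also have "\<dots> = [lx, ly]" by (simp add: inv_word_def red_eval)
  finally show "\<psi> [lY, lY] = [lx, ly]" .
qed

text \<open>psi kills all four conjugates y^b x^c y^-b: for b = True, c = False this is
  an assumption, the others follow by inversion and from y x y^-1 = y^2 (y^-1 x y) y^-2.\<close>
lemma psi_conjugate: "\<psi> [(Gy, b), (Gx, c), (Gy, \<not> b)] = []"
proof -
  have Yxy: "\<psi> [lY, lx, ly] = []"
    using pc by (simp add: gy_def gy_inv_def gx_def fg_mult fg_one red_eval)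
  have "\<psi> [lY, lX, ly] = \<psi> (red (inv_word [lY, lx, ly]))" by (simp add: inv_word_def red_eval)
  also have "\<dots> = []"
    using psi_inv_word[of "[lY, lx, ly]"] Yxy by (simp add: H_set_iff y_letter_exp_def inv_letter_def inv_word_def)
  finally have YXy: "\<psi> [lY, lX, ly] = []" .
  have H: "[lY, lx, ly] \<in> H_set" "[lY, lY] \<in> H_set" "[ly, ly] \<in> H_set" "[lY, lx, lY] \<in> H_set"
    by (simp_all add: H_set_iff y_letter_exp_def red_eval)
  have "\<psi> [lY, lx, lY] = \<psi> (red ([lY, lx, ly] @ [lY, lY]))" by (simp add: red_eval)
  also have "\<dots> = [lx, ly]"
    using psi_mult[OF H(1) H(2)] Yxy psi_y_square by (simp add: red_eval)
  finally have "\<psi> [lY, lx, lY] = [lx, ly]" .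
  have "\<psi> [ly, lx, lY] = \<psi> (red ([ly, ly] @ [lY, lx, lY]))" by (simp add: red_eval)
  also have "\<dots> = []"
    using psi_mult[OF H(3) H(4)] psi_y_square \<open>\<psi> [lY, lx, lY] = [lx, ly]\<close> by (simp add: red_eval)
  finally have yxY: "\<psi> [ly, lx, lY] = []" .
  have "\<psi> [ly, lX, lY] = \<psi> (red (inv_word [ly, lx, lY]))" by (simp add: inv_word_def red_eval)
  also have "\<dots> = []"
    using psi_inv_word[of "[ly, lx, lY]"] yxY by (simp add: H_set_iff y_letter_exp_def inv_letter_def inv_word_def)
  finally have yXY: "\<psi> [ly, lX, lY] = []" .
  show ?thesis using Yxy YXy yxY yXY by (cases b; cases c) simp_all
qed

lemma psi_generators: "g \<in> H_generators \<Longrightarrow> \<psi> g = psi_word g"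
  using psi_x_power psi_y_square psi_conjugate
  by (auto simp: H_generators_def psi_tr_def red_eval)

lemma psi_eq_psi_word: "w \<in> H_set \<Longrightarrow> \<psi> w = psi_word w"
proof (induction rule: H_set_induct)
  case Nil then show ?case by (simp add: psi_Nil)
next
  case (step g w)
  have "g \<in> H_set" using step.hyps(1) by (rule H_generators_in_H)
  then have "\<psi> (red (g @ w)) = red (psi_word g @ psi_word w)"
    using psi_mult step psi_generators by simp
  also have "\<dots> = psi_word (red (g @ w))"
    using \<open>g \<in> H_set\<close> by (simp add: psi_word_mult H_set_iff)
  finally show ?case .
qed

lemma psi_hat_eq_psi_hat_xy:
  assumes w: "reduced w"
  shows "psi_hat \<psi> w = psi_hat_xy w"
proof (cases "even (y_exp w)")
  case True
  then have "w \<in> H_set" using w by (simp add: H_set_iff)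
  then show ?thesis using True by (simp add: psi_hat_def psi_hat_xy_def psi_eq_psi_word)
next
  case False
  have "w \<notin> H_set" using False by (simp add: H_set_iff)
  moreover have "gy_inv \<otimes>\<^bsub>free_group2\<^esub> w = red (lY # w)" by (simp add: fg_mult gy_inv_def)
  moreover have "red (lY # w) \<in> H_set" using False by (simp add: H_set_iff y_letter_exp_def)
  ultimately have "psi_hat \<psi> w = psi_word (red (lY # w))"
    by (simp add: psi_hat_def psi_eq_psi_word)
  also have "\<dots> = psi_hat_xy w"
    using False by (simp add: psi_hat_xy_def red_run_red[OF psi_tr_respects_cancellation])
  finally show ?thesis .
qed

lemma psi_hat_iter_eq:
  assumes w: "reduced w"
  shows "(psi_hat \<psi> ^^ k) w = (psi_hat_xy ^^ k) w"
proof (induction k)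
  case (Suc k)
  have "reduced ((psi_hat_xy ^^ k) w)" using w by (cases k) (simp_all add: psi_hat_xy_def)
  then show ?case using Suc.IH by (simp add: psi_hat_eq_psi_hat_xy)
qed simp

end

section \<open>Change of basis t = xy\<close>

text \<open>In the new basis (t, y) the letter Gx stands for t = xy.  The automorphism
  sends x to t y^-1, and its inverse sends t to xy.\<close>

definition ty_letter :: "letter \<Rightarrow> letter list" where
  "ty_letter a = (if fst a = Gx then (if snd a then [ly, lX] else [lx, lY]) else [a])"

definition xy_letter :: "letter \<Rightarrow> letter list" where
  "xy_letter a = (if fst a = Gx then (if snd a then [lY, lX] else [lx, ly]) else [a])"

definition to_ty :: "letter list \<Rightarrow> letter list" where
  "to_ty w = red (concat (map ty_letter w))"

definition to_xy :: "letter list \<Rightarrow> letter list" where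
  "to_xy w = red (concat (map xy_letter w))"

lemma ty_letter_cancel: "red (ty_letter a @ ty_letter (inv_letter a)) = []"
  by (cases a rule: letter_cases) (simp_all add: ty_letter_def red_eval)

lemma xy_letter_cancel: "red (xy_letter a @ xy_letter (inv_letter a)) = []"
  by (cases a rule: letter_cases) (simp_all add: xy_letter_def red_eval)

lemma to_xy_ty_letter: "red (concat (map xy_letter (ty_letter a))) = [a]"
  by (cases a rule: letter_cases) (simp_all add: ty_letter_def xy_letter_def red_eval)

lemma to_xy_to_ty: "reduced w \<Longrightarrow> to_xy (to_ty w) = w"
proof -
  have "red (concat (map xy_letter (concat (map ty_letter w)))) = red w"
  proof (induction w)
    case (Cons a w)
    have "red (concat (map xy_letter (concat (map ty_letter (a # w))))) =
        red (red (concat (map xy_letter (ty_letter a))) @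
             red (concat (map xy_letter (concat (map ty_letter w)))))"
      by (simp add: red_append_red_both)
    also have "\<dots> = red (a # w)" using Cons by (simp add: to_xy_ty_letter)
    finally show ?case .
  qed simp
  moreover assume "reduced w"
  ultimately show ?thesis
    by (simp add: to_xy_def to_ty_def red_concat_map_red[of xy_letter, OF xy_letter_cancel] red_reduced)
qed

lemma even_length_ty: "even (length (concat (map ty_letter w))) \<longleftrightarrow> even (y_exp w)"
proof (induction w)
  case (Cons a w)
  then show ?case by (cases a rule: letter_cases) (simp_all add: ty_letter_def y_letter_exp_def)
qed simp

text \<open>psi_tr in the basis (t, y).  Every letter of a (t, y)-word changes the coset
  of H, since t has y-exponent 1.\<close>

definition psi_ty_tr :: transducer where
  "psi_ty_tr s a =
     ((if fst a = Gx then (if snd a then (if s then [lY] else [lx]) else (if s then [lX] else [ly]))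
       else (if snd a then (if s then [] else [lx]) else (if s then [lX] else []))), \<not> s)"

definition psi_hat_ty :: "letter list \<Rightarrow> letter list" where
  "psi_hat_ty v = red (run psi_ty_tr False (if even (length v) then v else lY # v))"

lemma psi_ty_tr_respects_cancellation: "respects_cancellation psi_ty_tr"
  unfolding respects_cancellation_def
proof (intro allI)
  fix s :: bool and a :: letter
  show "snd (psi_ty_tr (snd (psi_ty_tr s a)) (inv_letter a)) = s \<and>
       red (fst (psi_ty_tr s a) @ fst (psi_ty_tr (snd (psi_ty_tr s a)) (inv_letter a))) = []"
    by (cases a rule: letter_cases; cases s) (simp_all add: psi_ty_tr_def red_eval)
qed

lemma to_ty_run_psi_tr:
  "red (concat (map ty_letter (run psi_tr s u))) = red (run psi_ty_tr s (concat (map ty_letter u)))"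
proof (induction u arbitrary: s)
  case (Cons a u)
  have step: "final_state psi_ty_tr s (ty_letter a) = snd (psi_tr s a)"
    "red (concat (map ty_letter (fst (psi_tr s a)))) = red (run psi_ty_tr s (ty_letter a))"
    by (cases a rule: letter_cases; cases s; simp add: psi_tr_def psi_ty_tr_def ty_letter_def red_eval)+
  have "red (concat (map ty_letter (run psi_tr s (a # u)))) =
      red (red (concat (map ty_letter (fst (psi_tr s a)))) @
           red (concat (map ty_letter (run psi_tr (snd (psi_tr s a)) u))))"
    by (simp add: red_append_red_both)
  also have "\<dots> = red (red (run psi_ty_tr s (ty_letter a)) @
      red (run psi_ty_tr (final_state psi_ty_tr s (ty_letter a)) (concat (map ty_letter u))))"
    using step Cons by simp
  also have "\<dots> = red (run psi_ty_tr s (concat (map ty_letter (a # u))))"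
    by (simp add: run_append red_append_red_both)
  finally show ?case .
qed simp

lemma psi_hat_ty_red: "psi_hat_ty (red z) = psi_hat_ty z"
proof (cases "even (length z)")
  case True
  then show ?thesis
    by (simp add: psi_hat_ty_def even_length_red red_run_red[OF psi_ty_tr_respects_cancellation])
next
  case False
  have "red (run psi_ty_tr False (lY # red z)) = red (run psi_ty_tr False (red (lY # red z)))"
    by (rule red_run_red[OF psi_ty_tr_respects_cancellation, symmetric])
  also have "\<dots> = red (run psi_ty_tr False (lY # z))"
    by (simp add: red_run_red[OF psi_ty_tr_respects_cancellation])
  finally show ?thesis using False by (simp add: psi_hat_ty_def even_length_red)
qed

lemma to_ty_psi_hat_xy: "to_ty (psi_hat_xy w) = psi_hat_ty (to_ty w)"
proof -
  let ?u = "if even (y_exp w) then w else lY # w"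
  have "to_ty (psi_hat_xy w) = red (concat (map ty_letter (run psi_tr False ?u)))"
    by (simp add: to_ty_def psi_hat_xy_def red_concat_map_red[of ty_letter, OF ty_letter_cancel])
  also have "\<dots> = red (run psi_ty_tr False (concat (map ty_letter ?u)))"
    by (rule to_ty_run_psi_tr)
  also have "\<dots> = psi_hat_ty (concat (map ty_letter w))"
    by (simp add: psi_hat_ty_def even_length_ty ty_letter_def)
  also have "\<dots> = psi_hat_ty (to_ty w)"
    by (simp add: to_ty_def psi_hat_ty_red)
  finally show ?thesis .
qed

lemma psi_hat_xy_iter:
  assumes "reduced w"
  shows "(psi_hat_xy ^^ k) w = to_xy ((psi_hat_ty ^^ k) (to_ty w))"
proof -
  have "to_ty ((psi_hat_xy ^^ k) w) = (psi_hat_ty ^^ k) (to_ty w)"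
    by (induction k) (simp_all add: to_ty_psi_hat_xy)
  moreover have "reduced ((psi_hat_xy ^^ k) w)"
    using assms by (cases k) (simp_all add: psi_hat_xy_def)
  ultimately show ?thesis by (metis to_xy_to_ty)
qed

text \<open>The set N written in the basis (t, y): 1, t, t^-1, y, y^-1, t y^-1 = x, y t^-1 = x^-1.\<close>
definition N_ty :: "letter list set" where
  "N_ty = {[], [lx], [lX], [ly], [lY], [lx, lY], [ly, lX]}"

lemma to_xy_N_ty: "v \<in> N_ty \<Longrightarrow> to_xy v \<in> N_set"
  by (auto simp: N_ty_def N_set_def to_xy_def xy_letter_def red_eval gx_def gy_def gx_inv_def gy_inv_def)

section \<open>psi_hat_ty applied twice shortens words\<close>

text \<open>Reading a word of even length, the transducer psi_ty_tr starts each pair of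
  letters in the trivial coset; so psi_hat_ty replaces each such pair a b by the
  reduced word pair_image a b, of length at most two.\<close>

fun pair_image :: "letter \<Rightarrow> letter \<Rightarrow> letter list" where
  "pair_image (Gx, False) (Gx, False) = [ly, lX]"
| "pair_image (Gx, False) (Gy, False) = [ly, lX]"
| "pair_image (Gx, False) (Gy, True) = [ly]"
| "pair_image (Gy, False) (Gx, False) = [lX]"
| "pair_image (Gy, False) (Gy, False) = [lX]"
| "pair_image (Gy, False) (Gx, True) = [lY]"
| "pair_image (Gx, True) (Gx, True) = [lx, lY]"
| "pair_image (Gx, True) (Gy, True) = [lx]"
| "pair_image (Gy, True) (Gx, True) = [lx, lY]"
| "pair_image (Gy, True) (Gy, True) = [lx]"
| "pair_image _ _ = []"

fun pairs_image :: "letter list \<Rightarrow> letter list" where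
  "pairs_image (a # b # w) = pair_image a b @ pairs_image w"
| "pairs_image _ = []"

definition psi_hat_ty_raw :: "letter list \<Rightarrow> letter list" where
  "psi_hat_ty_raw v = pairs_image (if even (length v) then v else lY # v)"

lemma red_run_psi_ty_tr:
  "even (length u) \<Longrightarrow> red (run psi_ty_tr False u) = red (pairs_image u)"
proof (induction u rule: pairs_image.induct)
  case (1 a b w)
  have pair: "red (fst (psi_ty_tr False a) @ fst (psi_ty_tr True b)) = pair_image a b"
    by (cases a rule: letter_cases; cases b rule: letter_cases) (simp_all add: psi_ty_tr_def red_eval)
  have "red (run psi_ty_tr False (a # b # w)) =
      red (red (fst (psi_ty_tr False a) @ fst (psi_ty_tr True b)) @ red (run psi_ty_tr False w))"
    by (simp add: psi_ty_tr_def red_append_red_both)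
  also have "\<dots> = red (pair_image a b @ red (pairs_image w))" using 1 pair by simp
  finally show ?case by (simp add: red_append_red_right)
qed simp_all

lemma psi_hat_ty_eq_raw: "psi_hat_ty v = red (psi_hat_ty_raw v)"
  by (simp add: psi_hat_ty_def psi_hat_ty_raw_def red_run_psi_ty_tr)

lemma psi_hat_ty_twice: "psi_hat_ty (psi_hat_ty v) = red (psi_hat_ty_raw (psi_hat_ty_raw v))"
  by (simp only: psi_hat_ty_eq_raw[of v] psi_hat_ty_red) (rule psi_hat_ty_eq_raw)

text \<open>The length of the next image of X is controlled by a potential: each
  pair contributes three times its image length, and an unpaired first letter c
  (which will be paired with y^-1) contributes letter_weight c.\<close>

fun letter_weight :: "letter \<Rightarrow> nat" where
  "letter_weight (Gx, False) = 2"
| "letter_weight (Gx, True) = 4"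
| "letter_weight (Gy, False) = 2"
| "letter_weight (Gy, True) = 1"

definition potential :: "letter list \<Rightarrow> nat" where
  "potential X = (if even (length X) then 3 * length (pairs_image X)
     else 3 * length (pairs_image (tl X)) + letter_weight (hd X))"

lemma pair_image_length: "length (pair_image a b) \<le> 2"
  by (cases a rule: letter_cases; cases b rule: letter_cases) simp_all

lemma letter_weight_le: "letter_weight c \<le> 4"
  by (cases c rule: letter_cases) simp_all

lemma pair_image_weight: "3 * length (pair_image a c) \<le> 4 + letter_weight c"
  by (cases a rule: letter_cases; cases c rule: letter_cases) simp_all

lemma pair_image_Y_weight: "3 * length (pair_image lY c) \<le> letter_weight c + 2"
  by (cases c rule: letter_cases) simp_all

text \<open>Images of length two are t y^-1 or y t^-1, whose letters are cheap to re-pair.\<close>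
lemma pair_image_two:
  assumes "pair_image a b = [b1, b2]"
  shows "3 * length (pair_image b1 b2) \<le> 4 \<and> 3 * length (pair_image b2 c) + letter_weight b1 \<le> 4 + letter_weight c"
proof -
  have "(b1 = ly \<and> b2 = lX) \<or> (b1 = lx \<and> b2 = lY)"
    using assms by (cases a rule: letter_cases; cases b rule: letter_cases) simp_all
  then show ?thesis by (cases c rule: letter_cases) auto
qed

lemma potential_append_pair: "potential (pair_image a b @ X) \<le> potential X + 4"
proof -
  consider "pair_image a b = []" | b1 where "pair_image a b = [b1]"
    | b1 b2 where "pair_image a b = [b1, b2]"
    using pair_image_length[of a b] by (auto simp: le_Suc_eq length_Suc_conv numeral_2_eq_2)
  then show ?thesis
  proof cases
    case 1 then show ?thesis by simp
  next
    case (2 b1)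
    show ?thesis
    proof (cases X)
      case Nil then show ?thesis using 2 letter_weight_le[of b1] by (simp add: potential_def)
    next
      case (Cons c X')
      then show ?thesis using 2 letter_weight_le[of b1] pair_image_weight[of b1 c]
        by (simp add: potential_def)
    qed
  next
    case (3 b1 b2)
    then show ?thesis using pair_image_two[OF 3, of "hd X"] by (cases X) (simp_all add: potential_def)
  qed
qed

lemma potential_pairs_image: "even (length u) \<Longrightarrow> potential (pairs_image u) \<le> 2 * length u"
proof (induction u rule: pairs_image.induct)
  case (1 a b w)
  then show ?case using potential_append_pair[of a b "pairs_image w"] by simp
qed (simp_all add: potential_def)

lemma length_raw_le_potential: "3 * length (psi_hat_ty_raw X) \<le> potential X + 2"
proof (cases "even (length X)")
  case False
  then obtain c X' where "X = c # X'" by (cases X) auto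
  then show ?thesis using False pair_image_Y_weight[of c]
    by (simp add: psi_hat_ty_raw_def potential_def)
qed (simp add: psi_hat_ty_raw_def potential_def)

lemma length_raw_twice:
  "3 * length (psi_hat_ty_raw (psi_hat_ty_raw v)) \<le> 2 * length v + (if even (length v) then 2 else 4)"
proof -
  let ?u = "if even (length v) then v else lY # v"
  have "3 * length (psi_hat_ty_raw (psi_hat_ty_raw v)) \<le> potential (pairs_image ?u) + 2"
    using length_raw_le_potential by (simp add: psi_hat_ty_raw_def)
  also have "\<dots> \<le> 2 * length ?u + 2"
    using potential_pairs_image[of ?u] by simp
  finally show ?thesis by (cases "even (length v)") simp_all
qed

lemma length_raw_twice_three: "length (psi_hat_ty_raw (psi_hat_ty_raw [a, b, c])) \<le> 2"
  by (cases a rule: letter_cases; cases b rule: letter_cases; cases c rule: letter_cases)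
     (simp_all add: psi_hat_ty_raw_def)

text \<open>Two steps of psi_hat_ty shorten every word of length at least three: by the
  potential bound for length at least four, by inspection for length three.\<close>
lemma psi_hat_ty_twice_shrinks:
  assumes "3 \<le> length v"
  shows "length (psi_hat_ty (psi_hat_ty v)) < length v"
proof -
  have "length (psi_hat_ty_raw (psi_hat_ty_raw v)) < length v"
  proof (cases "length v = 3")
    case True
    then obtain a b c where "v = [a, b, c]" by (auto simp: length_Suc_conv numeral_3_eq_3)
    then show ?thesis using length_raw_twice_three[of a b c] by simp
  next
    case False
    then have "2 * length v + (if even (length v) then 2 else 4) < 3 * length v"
      using assms by presburger
    then show ?thesis using length_raw_twice[of v] by linarith
  qed
  then show ?thesis using length_red by (metis psi_hat_ty_twice le_less_trans)
qed

lemma psi_hat_ty_two: "psi_hat_ty [a, b] \<in> N_ty"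
  by (cases a rule: letter_cases; cases b rule: letter_cases)
     (simp_all add: psi_hat_ty_eq_raw psi_hat_ty_raw_def N_ty_def red_eval)

theorem psi_hat_ty_reaches_N_ty: "\<exists>k. (psi_hat_ty ^^ k) v \<in> N_ty"
proof (induction "length v" arbitrary: v rule: less_induct)
  case less
  show ?case
  proof (cases "length v \<le> 2")
    case True
    then consider "v = []" | a where "v = [a]" | a b where "v = [a, b]"
      by (cases v; cases "tl v"; auto simp: length_Suc_conv)
    then show ?thesis
    proof cases
      case 1 then show ?thesis by (intro exI[of _ 0]) (simp add: N_ty_def)
    next
      case (2 a) then show ?thesis by (intro exI[of _ 0]) (cases a rule: letter_cases; simp add: N_ty_def)
    next
      case (3 a b) then show ?thesis using psi_hat_ty_two by (intro exI[of _ 1]) simp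
    qed
  next
    case False
    then obtain k where "(psi_hat_ty ^^ k) (psi_hat_ty (psi_hat_ty v)) \<in> N_ty"
      using less psi_hat_ty_twice_shrinks by fastforce
    then have "(psi_hat_ty ^^ (k + 2)) v \<in> N_ty"
      by (simp add: funpow_add funpow_Suc_right numeral_2_eq_2 del: funpow.simps(2))
    then show ?thesis ..
  qed
qed

theorem mainTheorem14:
  fixes \<psi> :: "letter list \<Rightarrow> letter list"
  assumes hom: "\<psi> \<in> hom (free_group2\<lparr>carrier := H_set\<rparr>) free_group2"
    and px: "\<psi> gx = gy"
    and py2: "\<psi> (gy \<otimes>\<^bsub>free_group2\<^esub> gy) = gy_inv \<otimes>\<^bsub>free_group2\<^esub> gx_inv"
    and pc: "\<psi> (gy_inv \<otimes>\<^bsub>free_group2\<^esub> gx \<otimes>\<^bsub>free_group2\<^esub> gy) = \<one>\<^bsub>free_group2\<^esub>"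
  shows "\<forall>w \<in> carrier free_group2. \<exists>k::nat. (psi_hat \<psi> ^^ k) w \<in> N_set"
proof
  fix w assume "w \<in> carrier free_group2"
  then have w: "reduced w" by (simp add: fg_carrier)
  obtain k where k: "(psi_hat_ty ^^ k) (to_ty w) \<in> N_ty"
    using psi_hat_ty_reaches_N_ty by blast
  have "(psi_hat \<psi> ^^ k) w = to_xy ((psi_hat_ty ^^ k) (to_ty w))"
    using psi_hat_iter_eq[OF hom px py2 pc w] psi_hat_xy_iter[OF w] by simp
  then have "(psi_hat \<psi> ^^ k) w \<in> N_set" using to_xy_N_ty[OF k] by simp
  then show "\<exists>k. (psi_hat \<psi> ^^ k) w \<in> N_set" ..
qed

end
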